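(* For complex parameters $a,c$, \begin{align*} \sum_{n=0}^\infty \sum_{j=-n}^n (-1)^j \bigl(1-q^{2n+1}\bigr)q^{j^2-n} \frac{\bigl(q^2/a, q^2/c; q^2\bigr)_n (ac)^n}{\bigl(q^2 a, q^2 c; q^2\bigr)_n} =\frac{\bigl(q^2, ca; q^2\bigr)_\infty}{\bigl(q^2 a, q^2 c; q^2\bigr)_\infty}\sum_{n=0}^\infty \frac{\bigl(q^2/a, q^2/c; q^2\bigr)_n (ac/q)^n}{(-q; q)_{2n} \bigl(1+q^{2n+1}\bigr)}. \end{align*}
   Context: Throughout, $q$ is a complex number with $0<|q|<1$. For $x\in\mathbb{C}$ and base $p\in\{q,q^2\}$, $(x;p)_\infty=\prod_{k=0}^\infty(1-xp^k)$ and, for an integer $n\ge 0$, $(x;p)_n=\prod_{k=0}^{n-1}(1-xp^k)$; also $(x_1,\dots,x_m;p)_n=(x_1;p)_n\cdots(x_m;p)_n$ for $n$ an integer or $\infty$. *)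

theory Defs
  imports "HOL-Analysis.Analysis"
begin

definition qpoch :: "complex \<Rightarrow> complex \<Rightarrow> nat \<Rightarrow> complex" where
  "qpoch x p n = (\<Prod>k<n. (1 - x * p ^ k))"

definition qpoch_inf :: "complex \<Rightarrow> complex \<Rightarrow> complex" where
  "qpoch_inf x p = (\<Prod>k. (1 - x * p ^ k))"

end

(*
  Write p = q^2. The sequences
    alpha_n = (1 - q^(2n+1)) q^(-n) S_n,   S_n = sum of (-1)^j q^(j^2) over |j| <= n,
    beta_n  = q^(-n) / (-q;q)_(2n+1)
  form a Bailey pair relative to p: beta_n = sum_(r <= n) alpha_r / ((p;p)_(n-r) (p;p)_(n+r+1)).
  This comes from the identity  sum_k [N choose k]_p q^k S_(m-k) = (q;q)_N  for 0 <= m <= N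
  (N = 2n+1, m = n), whose left side does not depend on m because, by the q-binomial theorem,
  its differences in m are multiples of a vanishing q-Pochhammer symbol.
  The theorem is Bailey's lemma for this pair with the parameters p/a and p/c. The lemma is
  proved by interchanging the order of a double series, absolutely convergent because
  alpha_n = O(|q|^(-n)) and |ac| < |q|, and evaluating the inner sums with the q-Gauss
  summation, itself obtained from a three-term recurrence in its denominator parameter.
*)

theory Submission
  imports Defs
begin

lemma qpoch_0 [simp]: "qpoch x p 0 = 1"
  by (simp add: qpoch_def)

lemma qpoch_Suc: "qpoch x p (Suc n) = qpoch x p n * (1 - x * p ^ n)"
  by (simp add: qpoch_def)

lemma qpoch_add: "qpoch x p (m + n) = qpoch x p m * qpoch (x * p ^ m) p n"
  by (induction n) (simp_all add: qpoch_Suc power_add mult_ac)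

lemma qpoch_Suc_left: "qpoch x p (Suc n) = (1 - x) * qpoch (x * p) p n"
  using qpoch_add[of x p 1 n] by (simp add: qpoch_def)

lemma qpoch_nonzero:
  assumes "\<And>k. k < n \<Longrightarrow> x * p ^ k \<noteq> 1"
  shows "qpoch x p n \<noteq> 0"
  using assms unfolding qpoch_def by (auto simp: prod_zero_iff)

lemma power_neq_one:
  fixes p :: complex
  assumes "norm p < 1" "0 < j"
  shows "p ^ j \<noteq> 1"
proof -
  have "norm (p ^ j) < 1"
    using assms by (simp add: norm_power power_less_one_iff)
  then show ?thesis by auto
qed

lemma mult_power_neq_one:
  fixes p x :: complex
  assumes "norm x < 1" "norm p \<le> 1"
  shows "x * p ^ k \<noteq> 1"
proof -
  have "norm (x * p ^ k) \<le> norm x"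
    using assms by (simp add: norm_mult norm_power mult_left_le power_le_one)
  then show ?thesis using assms(1) by auto
qed

lemma mult_power_self_neq_one: "norm p < 1 \<Longrightarrow> p * p ^ k \<noteq> (1::complex)"
  using power_neq_one[of p "Suc k"] by simp

lemma qpoch_self_nonzero: "norm p < 1 \<Longrightarrow> qpoch p p n \<noteq> 0"
  by (intro qpoch_nonzero mult_power_self_neq_one)

lemma convergent_prod_qpoch:
  fixes p x :: complex
  assumes "norm p < 1"
  shows "convergent_prod (\<lambda>k. 1 - x * p ^ k)"
proof -
  have "summable (\<lambda>k. norm x * norm p ^ k)"
    using assms by (intro summable_mult summable_geometric) auto
  then have "summable (\<lambda>k. norm ((1 - x * p ^ k) - 1))"
    by (simp add: norm_mult norm_power)
  then show ?thesis
    by (intro abs_convergent_prod_imp_convergent_prod summable_imp_abs_convergent_prod)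
qed

lemma qpoch_tendsto_qpoch_inf:
  assumes "norm p < 1"
  shows "(\<lambda>n. qpoch x p n) \<longlonglongrightarrow> qpoch_inf x p"
proof -
  have "(\<lambda>n. \<Prod>k\<le>n. 1 - x * p ^ k) \<longlonglongrightarrow> qpoch_inf x p"
    unfolding qpoch_inf_def by (rule convergent_prod_LIMSEQ[OF convergent_prod_qpoch[OF assms]])
  then have "(\<lambda>n. qpoch x p (Suc n)) \<longlonglongrightarrow> qpoch_inf x p"
    by (simp add: qpoch_def lessThan_Suc_atMost)
  then show ?thesis by (rule LIMSEQ_imp_Suc)
qed

lemma qpoch_inf_nonzero:
  assumes "norm p < 1" "\<And>k. x * p ^ k \<noteq> 1"
  shows "qpoch_inf x p \<noteq> 0"
  unfolding qpoch_inf_def using assms by (intro prodinf_nonzero convergent_prod_qpoch) auto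

lemma qpoch_inf_eq_qpoch_mult:
  assumes "norm p < 1"
  shows "qpoch_inf x p = qpoch x p m * qpoch_inf (x * p ^ m) p"
proof -
  have "(\<lambda>n. qpoch x p (m + n)) \<longlonglongrightarrow> qpoch_inf x p"
    using LIMSEQ_ignore_initial_segment[OF qpoch_tendsto_qpoch_inf[OF assms], of x m]
    by (simp add: add.commute)
  moreover have "(\<lambda>n. qpoch x p (m + n)) \<longlonglongrightarrow> qpoch x p m * qpoch_inf (x * p ^ m) p"
    unfolding qpoch_add by (intro tendsto_mult tendsto_const qpoch_tendsto_qpoch_inf assms)
  ultimately show ?thesis by (rule LIMSEQ_unique)
qed

lemma qpoch_bounded:
  assumes "norm p < 1"
  obtains M where "\<And>n. norm (qpoch x p n) \<le> M"
proof -
  have "Bseq (\<lambda>n. qpoch x p n)"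
    using qpoch_tendsto_qpoch_inf[OF assms] by (rule convergent_imp_Bseq[OF convergentI])
  then show ?thesis using that unfolding Bseq_def by (metis less_imp_le)
qed

lemma qpoch_bounded_below:
  assumes "norm p < 1" "\<And>k. x * p ^ k \<noteq> 1"
  obtains d where "d > 0" "\<And>n. d \<le> norm (qpoch x p n)"
proof -
  have lim: "(\<lambda>n. norm (qpoch x p n)) \<longlonglongrightarrow> norm (qpoch_inf x p)"
    by (intro tendsto_norm qpoch_tendsto_qpoch_inf assms)
  have pos: "norm (qpoch_inf x p) / 2 < norm (qpoch_inf x p)"
    using qpoch_inf_nonzero[OF assms] by simp
  obtain N where N: "\<And>n. n \<ge> N \<Longrightarrow> norm (qpoch_inf x p) / 2 < norm (qpoch x p n)"
    using order_tendstoD(1)[OF lim pos] by (auto simp: eventually_at_top_linorder)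
  define d where "d = min (norm (qpoch_inf x p) / 2) (Min ((\<lambda>n. norm (qpoch x p n)) ` {..N}))"
  have "d > 0"
    unfolding d_def using pos qpoch_nonzero[of n x p for n] assms(2) by (auto simp: Min_gr_iff)
  moreover have "d \<le> norm (qpoch x p n)" for n
  proof (cases "n \<le> N")
    case True
    then show ?thesis unfolding d_def by (intro min.coboundedI2 Min_le) auto
  next
    case False
    then show ?thesis using N[of n] unfolding d_def by linarith
  qed
  ultimately show ?thesis using that by blast
qed

lemma qpoch_mult_qpoch_minus: "qpoch q q N * qpoch (-q) q N = qpoch (q\<^sup>2) (q\<^sup>2) N"
proof (induction N)
  case (Suc N)
  have "(1 - q * q ^ N) * (1 - (-q) * q ^ N) = 1 - q\<^sup>2 * (q\<^sup>2) ^ N"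
    by (simp add: algebra_simps power2_eq_square power_mult_distrib)
  with Suc show ?case
    by (simp add: qpoch_Suc) (metis mult.assoc mult.left_commute)
qed simp

section \<open>The q-Gauss summation\<close>

definition q_gauss_term :: "complex \<Rightarrow> complex \<Rightarrow> complex \<Rightarrow> complex \<Rightarrow> nat \<Rightarrow> complex" where
  "q_gauss_term A B C p m =
     qpoch A p m * qpoch B p m / (qpoch p p m * qpoch C p m) * (C / (A * B)) ^ m"

lemma q_gauss_term_0 [simp]: "q_gauss_term A B C p 0 = 1"
  by (simp add: q_gauss_term_def)

context
  fixes A B p :: complex
  assumes p: "norm p < 1" and A: "A \<noteq> 0" and B: "B \<noteq> 0"
begin

lemma q_gauss_cond_shift:
  assumes "norm (C / (A * B)) < 1" "\<And>k. C * p ^ k \<noteq> 1"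
  shows "norm (C * p ^ K / (A * B)) < 1" "\<And>k. C * p ^ K * p ^ k \<noteq> 1"
proof -
  have "norm (C * p ^ K / (A * B)) = norm (C / (A * B)) * norm p ^ K"
    by (simp add: norm_mult norm_divide norm_power)
  also have "\<dots> \<le> norm (C / (A * B))"
    using p by (simp add: mult_left_le power_le_one)
  finally show "norm (C * p ^ K / (A * B)) < 1" using assms(1) by simp
  show "C * p ^ K * p ^ k \<noteq> 1" for k
    using assms(2)[of "K + k"] by (simp add: power_add mult.assoc)
qed

lemma q_gauss_term_Suc:
  assumes "C * p ^ m \<noteq> 1"
  shows "q_gauss_term A B C p (Suc m) = q_gauss_term A B C p m
           * ((1 - A * p ^ m) * (1 - B * p ^ m) * (C / (A * B))) / ((1 - p * p ^ m) * (1 - C * p ^ m))"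
  using assms mult_power_self_neq_one[OF p, of m]
  by (simp add: q_gauss_term_def qpoch_Suc field_simps)

lemma q_gauss_term_shift:
  assumes "\<And>k. C * p ^ k \<noteq> 1"
  shows "q_gauss_term A B (C * p) p m = q_gauss_term A B C p m * (1 - C) * p ^ m / (1 - C * p ^ m)"
proof -
  have "qpoch (C * p) p m * (1 - C) = qpoch C p m * (1 - C * p ^ m)"
    using qpoch_Suc_left[of C p m] by (simp add: qpoch_Suc mult.commute)
  moreover have nonzero: "1 - C * p ^ m \<noteq> 0" "1 - C \<noteq> 0" "qpoch C p m \<noteq> 0"
    using assms[of m] assms[of 0] qpoch_nonzero[of m C p] assms by auto
  ultimately have shifted: "qpoch (C * p) p m = qpoch C p m * (1 - C * p ^ m) / (1 - C)"
    by (simp add: field_simps)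
  show ?thesis
    unfolding q_gauss_term_def shifted using nonzero qpoch_self_nonzero[OF p, of m]
    by (simp add: field_simps power_mult_distrib)
qed

text \<open>The bound is uniform in the shift \<open>K\<close>, which gives both summability and the limit
  of the series as \<open>C\<close> is replaced by \<open>C p\<^sup>K\<close>, \<open>K \<rightarrow> \<infinity>\<close>.\<close>

lemma q_gauss_term_bound:
  assumes "\<And>k. C * p ^ k \<noteq> 1"
  obtains E where "\<And>K m. norm (q_gauss_term A B (C * p ^ K) p m)
                     \<le> E * norm (C / (A * B)) ^ m * norm p ^ (K * m)"
proof -
  obtain MA where MA: "\<And>n. norm (qpoch A p n) \<le> MA" using qpoch_bounded[OF p] by blast
  obtain MB where MB: "\<And>n. norm (qpoch B p n) \<le> MB" using qpoch_bounded[OF p] by blast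
  obtain MC where MC: "\<And>n. norm (qpoch C p n) \<le> MC" using qpoch_bounded[OF p] by blast
  obtain dp where dp: "dp > 0" "\<And>n. dp \<le> norm (qpoch p p n)"
    using qpoch_bounded_below[OF p mult_power_self_neq_one[OF p]] by blast
  obtain dC where dC: "dC > 0" "\<And>n. dC \<le> norm (qpoch C p n)"
    using qpoch_bounded_below[OF p assms] by blast
  have "0 \<le> MA" "0 \<le> MB" "0 \<le> MC"
    using MA[of 0] MB[of 0] MC[of 0] by simp_all
  have "norm (q_gauss_term A B (C * p ^ K) p m)
          \<le> MA * MB * MC / (dp * dC) * norm (C / (A * B)) ^ m * norm p ^ (K * m)" for K m
  proof -
    have split: "qpoch C p (K + m) = qpoch C p K * qpoch (C * p ^ K) p m"
      by (rule qpoch_add)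
    have "qpoch C p K \<noteq> 0" "qpoch C p (K + m) \<noteq> 0"
      by (intro qpoch_nonzero assms)+
    then have "q_gauss_term A B (C * p ^ K) p m = qpoch A p m * qpoch B p m * qpoch C p K
               / (qpoch p p m * qpoch C p (K + m)) * (C / (A * B)) ^ m * (p ^ K) ^ m"
      unfolding q_gauss_term_def split by (simp add: field_simps power_mult_distrib)
    then have "norm (q_gauss_term A B (C * p ^ K) p m)
        = norm (qpoch A p m) * norm (qpoch B p m) * norm (qpoch C p K)
            / (norm (qpoch p p m) * norm (qpoch C p (K + m))) * norm (C / (A * B)) ^ m * norm p ^ (K * m)"
      by (simp add: norm_mult norm_divide norm_power power_mult)
    also have "\<dots> \<le> MA * MB * MC / (dp * dC) * norm (C / (A * B)) ^ m * norm p ^ (K * m)"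
      by (intro mult_right_mono frac_le mult_mono)
        (use MA MB MC dp dC \<open>0 \<le> MA\<close> \<open>0 \<le> MB\<close> \<open>0 \<le> MC\<close> in auto)
    finally show ?thesis .
  qed
  then show ?thesis using that by blast
qed

lemma q_gauss_term_summable_norm:
  assumes "norm (C / (A * B)) < 1" "\<And>k. C * p ^ k \<noteq> 1"
  shows "summable (\<lambda>m. norm (q_gauss_term A B C p m))"
proof -
  obtain E where E: "\<And>K m. norm (q_gauss_term A B (C * p ^ K) p m)
                       \<le> E * norm (C / (A * B)) ^ m * norm p ^ (K * m)"
    using q_gauss_term_bound[OF assms(2)] by blast
  have "summable (\<lambda>m. E * norm (C / (A * B)) ^ m)"
    using assms(1) by (intro summable_mult summable_geometric) auto
  moreover have "norm (norm (q_gauss_term A B C p m)) \<le> E * norm (C / (A * B)) ^ m" for m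
    using E[of 0 m] by simp
  ultimately show ?thesis by (rule summable_comparison_test'[where N = 0])
qed

lemma q_gauss_term_summable:
  "norm (C / (A * B)) < 1 \<Longrightarrow> (\<And>k. C * p ^ k \<noteq> 1) \<Longrightarrow> summable (q_gauss_term A B C p)"
  using q_gauss_term_summable_norm summable_norm_cancel by blast

text \<open>Let \<open>t\<close> be the terms of the series, \<open>t'\<close> those with \<open>C\<close> replaced by \<open>C p\<close>, and
  \<open>G m = (1 - C) (1 - p\<^sup>m) t m\<close>. Then \<open>(1 - C) (1 - C/(AB)) t m - (1 - C/A) (1 - C/B) t' m\<close>
  telescopes to \<open>G m - G (m + 1)\<close>; this is that identity with \<open>w = p\<^sup>m\<close> and \<open>T = t m\<close>.\<close>

lemma q_gauss_telescoping_identity: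
  fixes C w T :: complex
  assumes "1 - p * w \<noteq> 0" "1 - C * w \<noteq> 0"
  shows "(1 - C) * (1 - C / (A * B)) * T - (1 - C / A) * (1 - C / B) * (T * (1 - C) * w / (1 - C * w))
    = (1 - C) * (1 - w) * T - (1 - C) * (1 - p * w) * (T * ((1 - A * w) * (1 - B * w) * (C / (A * B)))
       / ((1 - p * w) * (1 - C * w)))"
proof -
  let ?D = "A * B * (1 - C * w)"
  have "?D \<noteq> 0" using assms A B by auto
  have lhs: "(1 - C) * (1 - C / (A * B)) * T - (1 - C / A) * (1 - C / B) * (T * (1 - C) * w / (1 - C * w))
      = (1 - C) * T * ((A * B - C) * (1 - C * w) - (A - C) * (B - C) * w) / ?D"
    using assms A B by (simp add: field_simps)
  have cancel: "(1 - p * w) * (T * ((1 - A * w) * (1 - B * w) * (C / (A * B))) / ((1 - p * w) * (1 - C * w)))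
      = T * ((1 - A * w) * (1 - B * w) * (C / (A * B))) / (1 - C * w)"
    using assms by (simp add: ac_simps)
  have rhs: "(1 - C) * (1 - w) * T - (1 - C) * (T * ((1 - A * w) * (1 - B * w) * (C / (A * B))) / (1 - C * w))
      = (1 - C) * T * (A * B * (1 - w) * (1 - C * w) - (1 - A * w) * (1 - B * w) * C) / ?D"
    using assms A B by (simp add: field_simps)
  have "(A * B - C) * (1 - C * w) - (A - C) * (B - C) * w
        = A * B * (1 - w) * (1 - C * w) - (1 - A * w) * (1 - B * w) * C"
    by algebra
  then show ?thesis
    unfolding mult.assoc[of "1 - C" "1 - p * w"] cancel using lhs rhs by (simp add: mult.assoc)
qed

lemma q_gauss_series_recurrence:
  assumes "norm (C / (A * B)) < 1" "\<And>k. C * p ^ k \<noteq> 1"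
  shows "(1 - C) * (1 - C / (A * B)) * (\<Sum>m. q_gauss_term A B C p m)
       = (1 - C / A) * (1 - C / B) * (\<Sum>m. q_gauss_term A B (C * p) p m)"
proof -
  define G where "G m = (1 - C) * (1 - p ^ m) * q_gauss_term A B C p m" for m
  have "(\<lambda>m. (1 - C) * (1 - p ^ m) * q_gauss_term A B C p m) \<longlonglongrightarrow> (1 - C) * (1 - 0) * 0"
    by (intro tendsto_intros LIMSEQ_power_zero summable_LIMSEQ_zero q_gauss_term_summable assms p)
  then have "G \<longlonglongrightarrow> 0" unfolding G_def by simp
  moreover have "G 0 = 0" by (simp add: G_def)
  ultimately have telescope: "(\<lambda>m. G m - G (Suc m)) sums 0"
    using telescope_sums' by fastforce
  have "(1 - C) * (1 - C / (A * B)) * q_gauss_term A B C p m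
          - (1 - C / A) * (1 - C / B) * q_gauss_term A B (C * p) p m = G m - G (Suc m)" for m
    unfolding G_def q_gauss_term_Suc[OF assms(2)] q_gauss_term_shift[OF assms(2)] power_Suc
    using mult_power_self_neq_one[OF p, of m] assms(2)[of m]
    by (intro q_gauss_telescoping_identity) auto
  moreover have shifted: "norm (C * p / (A * B)) < 1" "\<And>k. C * p * p ^ k \<noteq> 1"
    using q_gauss_cond_shift[OF assms, of 1] by simp_all
  then have "(\<lambda>m. (1 - C) * (1 - C / (A * B)) * q_gauss_term A B C p m
                 - (1 - C / A) * (1 - C / B) * q_gauss_term A B (C * p) p m)
        sums ((1 - C) * (1 - C / (A * B)) * (\<Sum>m. q_gauss_term A B C p m)
              - (1 - C / A) * (1 - C / B) * (\<Sum>m. q_gauss_term A B (C * p) p m))"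
    by (intro sums_diff sums_mult summable_sums q_gauss_term_summable assms shifted)
  ultimately have "(\<lambda>m. G m - G (Suc m))
        sums ((1 - C) * (1 - C / (A * B)) * (\<Sum>m. q_gauss_term A B C p m)
              - (1 - C / A) * (1 - C / B) * (\<Sum>m. q_gauss_term A B (C * p) p m))"
    by simp
  from sums_unique2[OF this telescope] show ?thesis
    by simp
qed

lemma q_gauss_series_iterate:
  assumes "norm (C / (A * B)) < 1" "\<And>k. C * p ^ k \<noteq> 1"
  shows "(\<Sum>m. q_gauss_term A B C p m)
       = qpoch (C / A) p K * qpoch (C / B) p K / (qpoch C p K * qpoch (C / (A * B)) p K)
           * (\<Sum>m. q_gauss_term A B (C * p ^ K) p m)"
proof (induction K)
  case 0
  then show ?case by simp
next
  case (Suc K)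
  have shifted: "norm (C * p ^ K / (A * B)) < 1" "\<And>k. C * p ^ K * p ^ k \<noteq> 1"
    by (rule q_gauss_cond_shift[OF assms])+
  have nonzero: "qpoch C p K \<noteq> 0" "qpoch (C / (A * B)) p K \<noteq> 0"
    "1 - C * p ^ K \<noteq> 0" "1 - C * p ^ K / (A * B) \<noteq> 0"
    using assms(2)[of K] shifted(1) qpoch_nonzero[of K C p] assms(2)
      qpoch_nonzero[of K "C / (A * B)" p] mult_power_neq_one[OF assms(1)] p
    by auto
  have solve: "s = y / x * t" if "x * s = y * t" "x \<noteq> 0" for x y s t :: complex
    using that by (simp add: field_simps)
  have step: "(\<Sum>m. q_gauss_term A B (C * p ^ K) p m)
      = (1 - C * p ^ K / A) * (1 - C * p ^ K / B) / ((1 - C * p ^ K) * (1 - C * p ^ K / (A * B)))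
          * (\<Sum>m. q_gauss_term A B (C * p ^ K * p) p m)"
    by (rule solve[OF q_gauss_series_recurrence[OF shifted]]) (use nonzero in simp)
  have "C * p ^ K * p = C * p ^ Suc K" by (simp add: mult_ac)
  have "C / A * p ^ K = C * p ^ K / A" "C / B * p ^ K = C * p ^ K / B"
    "C / (A * B) * p ^ K = C * p ^ K / (A * B)"
    by simp_all
  then show ?case
    unfolding Suc step qpoch_Suc \<open>C * p ^ K * p = C * p ^ Suc K\<close> using nonzero
    by (simp add: field_simps)
qed

lemma q_gauss_series_shift_tendsto:
  assumes "norm (C / (A * B)) < 1" "\<And>k. C * p ^ k \<noteq> 1"
  shows "(\<lambda>K. \<Sum>m. q_gauss_term A B (C * p ^ K) p m) \<longlonglongrightarrow> 1"
proof -
  define z where "z = norm (C / (A * B))"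
  have z: "0 \<le> z" "z < 1" using assms(1) unfolding z_def by auto
  obtain E where E: "\<And>K m. norm (q_gauss_term A B (C * p ^ K) p m) \<le> E * z ^ m * norm p ^ (K * m)"
    using q_gauss_term_bound[OF assms(2)] unfolding z_def by blast
  have "0 \<le> E" using E[of 0 0] by simp
  have bound: "norm ((\<Sum>m. q_gauss_term A B (C * p ^ K) p m) - 1) \<le> E * z / (1 - z) * norm p ^ K" for K
  proof -
    have summable: "summable (\<lambda>m. norm (q_gauss_term A B (C * p ^ K) p (Suc m)))"
      using q_gauss_term_summable_norm[OF q_gauss_cond_shift[OF assms]]
      by (subst summable_Suc_iff)
    have term_bound: "norm (q_gauss_term A B (C * p ^ K) p (Suc m)) \<le> E * z * norm p ^ K * z ^ m" for m
    proof -
      have "norm p ^ (K * Suc m) \<le> norm p ^ K"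
        using p by (intro power_decreasing) auto
      then have "E * z ^ Suc m * norm p ^ (K * Suc m) \<le> E * z ^ Suc m * norm p ^ K"
        using \<open>0 \<le> E\<close> z by (intro mult_left_mono) auto
      then show ?thesis using E[of K "Suc m"] by (simp add: mult_ac)
    qed
    have geometric: "(\<lambda>m. E * z * norm p ^ K * z ^ m) sums (E * z * norm p ^ K * (1 / (1 - z)))"
      using z by (intro sums_mult geometric_sums) auto
    have "(\<Sum>m. q_gauss_term A B (C * p ^ K) p m) - 1 = (\<Sum>m. q_gauss_term A B (C * p ^ K) p (Suc m))"
      using suminf_split_head[OF q_gauss_term_summable[OF q_gauss_cond_shift[OF assms]]] by simp
    also have "norm \<dots> \<le> (\<Sum>m. norm (q_gauss_term A B (C * p ^ K) p (Suc m)))"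
      using summable by (rule summable_norm)
    also have "\<dots> \<le> (\<Sum>m. E * z * norm p ^ K * z ^ m)"
      by (rule suminf_le[OF term_bound summable sums_summable[OF geometric]])
    also have "\<dots> = E * z / (1 - z) * norm p ^ K"
      using geometric by (simp add: sums_iff)
    finally show ?thesis .
  qed
  have "(\<lambda>K. E * z / (1 - z) * norm p ^ K) \<longlonglongrightarrow> E * z / (1 - z) * 0"
    using p by (intro tendsto_mult tendsto_const LIMSEQ_power_zero) auto
  then have majorant: "(\<lambda>K. E * z / (1 - z) * norm p ^ K) \<longlonglongrightarrow> 0"
    by (simp only: mult_zero_right)
  have "(\<lambda>K. (\<Sum>m. q_gauss_term A B (C * p ^ K) p m) - 1) \<longlonglongrightarrow> 0"
    by (rule Lim_null_comparison[OF always_eventually majorant]) (use bound in blast)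
  then show ?thesis
    by (simp add: LIM_zero_iff)
qed

theorem q_gauss_sums:
  assumes "norm (C / (A * B)) < 1" "\<And>k. C * p ^ k \<noteq> 1"
  shows "q_gauss_term A B C p sums
           (qpoch_inf (C / A) p * qpoch_inf (C / B) p / (qpoch_inf C p * qpoch_inf (C / (A * B)) p))"
proof -
  have "qpoch_inf C p \<noteq> 0" "qpoch_inf (C / (A * B)) p \<noteq> 0"
    using p by (intro qpoch_inf_nonzero assms(2) mult_power_neq_one[OF assms(1)]; simp)+
  then have "(\<lambda>K. qpoch (C / A) p K * qpoch (C / B) p K / (qpoch C p K * qpoch (C / (A * B)) p K)
           * (\<Sum>m. q_gauss_term A B (C * p ^ K) p m))
        \<longlonglongrightarrow> qpoch_inf (C / A) p * qpoch_inf (C / B) p / (qpoch_inf C p * qpoch_inf (C / (A * B)) p) * 1"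
    by (intro tendsto_mult tendsto_divide qpoch_tendsto_qpoch_inf p
        q_gauss_series_shift_tendsto assms) simp
  then have "(\<lambda>K. \<Sum>m. q_gauss_term A B C p m)
        \<longlonglongrightarrow> qpoch_inf (C / A) p * qpoch_inf (C / B) p / (qpoch_inf C p * qpoch_inf (C / (A * B)) p)"
    by (simp only: q_gauss_series_iterate[OF assms, symmetric] mult_1_right)
  then show ?thesis
    unfolding LIMSEQ_const_iff using summable_sums[OF q_gauss_term_summable[OF assms]] by simp
qed

end

section \<open>Partial theta sums\<close>

definition theta_term :: "complex \<Rightarrow> int \<Rightarrow> complex" where
  "theta_term q j = (-1) powi j * q powi (j\<^sup>2)"

text \<open>For \<open>m \<ge> 0\<close> the second sum is empty, leaving the partial theta sum over \<open>|j| \<le> m\<close>;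
  for \<open>m < 0\<close> it gives \<open>theta_sum q (-1 - m) = - theta_sum q m\<close>, which makes
  \<open>theta_sum_diff\<close> hold for all \<open>m\<close>.\<close>

definition theta_sum :: "complex \<Rightarrow> int \<Rightarrow> complex" where
  "theta_sum q m = sum (theta_term q) {-m..m} - sum (theta_term q) {m+1..-m-1}"

lemma theta_term_minus: "theta_term q (-j) = theta_term q j"
  unfolding theta_term_def by (simp add: power_int_minus_one_minus)

lemma theta_term_of_nat: "theta_term q (int k) = (-1) ^ k * q ^ (k\<^sup>2)"
  unfolding theta_term_def by (simp flip: of_nat_power)

lemma theta_sum_0 [simp]: "theta_sum q 0 = 1"
  by (simp add: theta_sum_def theta_term_def)

lemma theta_sum_reflect: "theta_sum q (-1 - m) = - theta_sum q m"
proof -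
  have "{-(-1-m)..-1-m} = {m+1..-m-1}" "{-1-m+1..-(-1-m)-1} = {-m..m}"
    by auto
  then show ?thesis unfolding theta_sum_def by (simp only:) simp
qed

lemma theta_sum_diff_pos:
  assumes "1 \<le> m"
  shows "theta_sum q m - theta_sum q (m - 1) = 2 * theta_term q m"
proof -
  have "{-m..m} = insert m (insert (-m) {-(m-1)..m-1})" using assms by auto
  then have "sum (theta_term q) {-m..m} = sum (theta_term q) {-(m-1)..m-1} + theta_term q m + theta_term q (-m)"
    using assms by simp
  moreover have "{m + 1..- m - 1} = {}" "{m - 1 + 1..- (m - 1) - 1} = {}"
    using assms by auto
  ultimately show ?thesis unfolding theta_sum_def theta_term_minus by simp
qed

lemma theta_sum_diff: "theta_sum q m - theta_sum q (m - 1) = 2 * theta_term q m"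
proof (cases "1 \<le> m")
  case True
  then show ?thesis by (rule theta_sum_diff_pos)
next
  case False
  show ?thesis
  proof (cases "m = 0")
    case True
    then show ?thesis
      using theta_sum_reflect[of q 0] by (simp add: theta_term_def)
  next
    case False
    with \<open>\<not> 1 \<le> m\<close> have "1 \<le> -m" by simp
    have "theta_sum q m - theta_sum q (m - 1) = theta_sum q (-m) - theta_sum q (-m - 1)"
      using theta_sum_reflect[of q "-m - 1"] theta_sum_reflect[of q "-m"] by simp
    also have "\<dots> = 2 * theta_term q m"
      using theta_sum_diff_pos[OF \<open>1 \<le> -m\<close>] theta_term_minus by simp
    finally show ?thesis .
  qed
qed

lemma theta_sum_bound:
  assumes "norm q < 1"
  shows "norm (theta_sum q (int r)) \<le> 1 + 2 / (1 - norm q)"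
proof -
  have "norm (theta_sum q (int r)) \<le> 1 + 2 * (\<Sum>i<r. norm q ^ i)"
  proof (induction r)
    case 0
    then show ?case by simp
  next
    case (Suc r)
    have "norm (theta_term q (int (Suc r))) = norm q ^ (Suc r)\<^sup>2"
      unfolding theta_term_of_nat by (simp add: norm_mult norm_power)
    also have "\<dots> \<le> norm q ^ r"
      using assms by (intro power_decreasing) (auto simp: power2_eq_square)
    finally have "norm (theta_term q (int (Suc r))) \<le> norm q ^ r" .
    moreover have "theta_sum q (int (Suc r)) = theta_sum q (int r) + 2 * theta_term q (int (Suc r))"
      using theta_sum_diff[of q "int (Suc r)"] by (simp add: algebra_simps)
    then have "norm (theta_sum q (int (Suc r))) \<le> norm (theta_sum q (int r)) + 2 * norm (theta_term q (int (Suc r)))"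
      using norm_triangle_ineq[of "theta_sum q (int r)" "2 * theta_term q (int (Suc r))"]
      by (simp add: norm_mult)
    ultimately show ?case using Suc.IH by simp
  qed
  also have "(\<Sum>i<r. norm q ^ i) = (1 - norm q ^ r) / (1 - norm q)"
    using assms by (simp add: sum_gp_strict)
  also have "\<dots> \<le> 1 / (1 - norm q)"
    using assms by (intro divide_right_mono) auto
  finally show ?thesis by simp
qed

definition qbinom :: "complex \<Rightarrow> nat \<Rightarrow> nat \<Rightarrow> complex" where
  "qbinom p N k = (if k \<le> N then qpoch p p N / (qpoch p p k * qpoch p p (N - k)) else 0)"

lemma qbinom_eq_0: "N < k \<Longrightarrow> qbinom p N k = 0"
  by (simp add: qbinom_def)

context
  fixes p :: complex
  assumes p: "norm p < 1"
begin

lemma qbinom_0 [simp]: "qbinom p N 0 = 1"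
  using qpoch_self_nonzero[OF p] by (simp add: qbinom_def)

lemma qbinom_self [simp]: "qbinom p N N = 1"
  using qpoch_self_nonzero[OF p] by (simp add: qbinom_def)

lemma qbinom_sym: "k \<le> N \<Longrightarrow> qbinom p N (N - k) = qbinom p N k"
  by (simp add: qbinom_def mult.commute)

lemma qbinom_Suc_Suc: "qbinom p (Suc N) (Suc k) = qbinom p N (Suc k) + p ^ (N - k) * qbinom p N k"
proof (cases "k < N")
  case False
  then show ?thesis
    by (cases "k = N") (simp_all add: qbinom_eq_0)
next
  case True
  define P where "P = qpoch p p"
  have P_nonzero: "P j \<noteq> 0" for j
    unfolding P_def by (rule qpoch_self_nonzero[OF p])
  have P_Suc: "P (Suc j) = P j * (1 - p * p ^ j)" for j
    unfolding P_def by (rule qpoch_Suc)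
  have factor_nonzero: "1 - p * p ^ j \<noteq> 0" for j
    using P_nonzero[of "Suc j"] unfolding P_Suc by auto
  have "N - k = Suc (N - Suc k)" using True by simp
  then have P_diff: "P (N - k) = P (N - Suc k) * (1 - p * p ^ (N - Suc k))"
    by (simp add: P_Suc)
  have "p * p ^ (N - Suc k) = p ^ (N - k)" "p ^ (N - k) * (p * p ^ k) = p * p ^ N"
    using True by (simp_all add: Suc_diff_Suc flip: power_Suc power_add)
  then have key: "1 - p * p ^ N = (1 - p * p ^ (N - Suc k)) + p ^ (N - k) * (1 - p * p ^ k)"
    by (simp add: algebra_simps)
  have partial_fractions: "PN * a / (Pk * b * (P' * d)) = PN / (Pk * b * P') + c * (PN / (Pk * (P' * d)))"
    if "Pk \<noteq> 0" "P' \<noteq> 0" "b \<noteq> 0" "d \<noteq> 0" "a = d + c * b" for PN Pk P' a b c d :: complex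
    using that by (simp add: field_simps)
  have "qbinom p (Suc N) (Suc k) = P N * (1 - p * p ^ N) / (P k * (1 - p * p ^ k) * P (N - k))"
    using True by (simp add: qbinom_def P_def P_Suc[unfolded P_def])
  also have "\<dots> = P N / (P k * (1 - p * p ^ k) * P (N - Suc k)) + p ^ (N - k) * (P N / (P k * P (N - k)))"
    unfolding P_diff by (rule partial_fractions[OF P_nonzero P_nonzero factor_nonzero factor_nonzero key])
  also have "\<dots> = qbinom p N (Suc k) + p ^ (N - k) * qbinom p N k"
    using True by (simp add: qbinom_def P_def P_Suc[unfolded P_def])
  finally show ?thesis .
qed

end

lemma q_binomial_Rothe:
  assumes "norm q < 1"
  shows "(\<Sum>k\<le>N. qbinom (q\<^sup>2) N k * ((-1) ^ k * q ^ (k * (k - 1)) * z ^ k)) = qpoch z (q\<^sup>2) N"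
proof -
  have q2: "norm (q\<^sup>2) < 1"
    using assms by (simp add: norm_power power_less_one_iff)
  show ?thesis
  proof (induction N)
    case 0
    show ?case using q2 by simp
  next
    case (Suc N)
    define a where "a k = (-1) ^ k * q ^ (k * (k - 1)) * z ^ k" for k
    have a_Suc: "a (Suc k) = - (z * (q\<^sup>2) ^ k) * a k" for k
    proof -
      have "Suc k * k = k * (k - 1) + 2 * k" by (cases k) auto
      then have "q ^ (Suc k * k) = q ^ (k * (k - 1)) * (q\<^sup>2) ^ k"
        by (simp only: power_add power_mult)
      then show ?thesis by (simp add: a_def)
    qed
    have "(\<Sum>k\<le>Suc N. qbinom (q\<^sup>2) (Suc N) k * a k)
        = qbinom (q\<^sup>2) (Suc N) 0 * a 0 + (\<Sum>k\<le>N. qbinom (q\<^sup>2) (Suc N) (Suc k) * a (Suc k))"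
      by (rule sum.atMost_Suc_shift)
    also have "\<dots> = a 0 + (\<Sum>k\<le>N. qbinom (q\<^sup>2) N (Suc k) * a (Suc k))
          + (\<Sum>k\<le>N. (q\<^sup>2) ^ (N - k) * qbinom (q\<^sup>2) N k * a (Suc k))"
      by (simp add: qbinom_0[OF q2] qbinom_Suc_Suc[OF q2] sum.distrib algebra_simps)
    also have "a 0 + (\<Sum>k\<le>N. qbinom (q\<^sup>2) N (Suc k) * a (Suc k)) = (\<Sum>k\<le>Suc N. qbinom (q\<^sup>2) N k * a k)"
      by (subst sum.atMost_Suc_shift) (simp add: qbinom_0[OF q2])
    also have "\<dots> = qpoch z (q\<^sup>2) N"
      using Suc by (simp add: a_def qbinom_eq_0)
    also have "(\<Sum>k\<le>N. (q\<^sup>2) ^ (N - k) * qbinom (q\<^sup>2) N k * a (Suc k))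
        = - (z * (q\<^sup>2) ^ N) * (\<Sum>k\<le>N. qbinom (q\<^sup>2) N k * a k)"
      unfolding sum_distrib_left
    proof (rule sum.cong)
      fix k assume "k \<in> {..N}"
      then have "(q\<^sup>2) ^ (N - k) * (q\<^sup>2) ^ k = (q\<^sup>2) ^ N"
        by (simp flip: power_add)
      then show "(q\<^sup>2) ^ (N - k) * qbinom (q\<^sup>2) N k * a (Suc k)
          = - (z * (q\<^sup>2) ^ N) * (qbinom (q\<^sup>2) N k * a k)"
        unfolding a_Suc by (simp add: algebra_simps)
    qed simp
    also have "(\<Sum>k\<le>N. qbinom (q\<^sup>2) N k * a k) = qpoch z (q\<^sup>2) N"
      using Suc by (simp add: a_def)
    finally show ?case
      by (simp add: a_def qpoch_Suc algebra_simps)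
  qed
qed

section \<open>A Bailey pair\<close>

definition theta_qbinom_sum :: "complex \<Rightarrow> nat \<Rightarrow> int \<Rightarrow> complex" where
  "theta_qbinom_sum q N m = (\<Sum>k\<le>N. qbinom (q\<^sup>2) N k * q ^ k * theta_sum q (m - int k))"

lemma theta_term_diff:
  assumes "q \<noteq> 0"
  shows "q ^ k * theta_term q (m - int k)
       = theta_term q m * ((-1) ^ k * q ^ (k * (k - 1)) * (q powi (2 - 2 * m)) ^ k)"
proof -
  have sign: "(-1::complex) powi (m - int k) = (-1) powi m * (-1) ^ k"
    using power_int_add[of "-1::complex" m "- int k"] by (simp add: power_int_minus_one_minus)
  have "int (k * (k - 1)) = int k * (int k - 1)"
    by (cases k) (auto simp: algebra_simps)
  then have exponent: "int k + (m - int k)\<^sup>2 = m\<^sup>2 + (int (k * (k - 1)) + (2 - 2 * m) * int k)"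
    by (simp only:) (simp add: power2_eq_square algebra_simps)
  have "q ^ k * q powi ((m - int k)\<^sup>2) = q powi (int k + (m - int k)\<^sup>2)"
    using assms by (simp add: power_int_add)
  also have "\<dots> = q powi (m\<^sup>2) * (q powi (int (k * (k - 1))) * q powi ((2 - 2 * m) * int k))"
    unfolding exponent using assms by (simp add: power_int_add)
  also have "\<dots> = q powi (m\<^sup>2) * (q ^ (k * (k - 1)) * (q powi (2 - 2 * m)) ^ k)"
    by (simp only: power_int_of_nat power_int_power')
  finally show ?thesis
    unfolding theta_term_def sign by (simp add: algebra_simps)
qed

context
  fixes q :: complex
  assumes q: "norm q < 1" and q_nonzero: "q \<noteq> 0"
begin

lemma norm_q2: "norm (q\<^sup>2) < 1"
  using q by (simp add: norm_power power_less_one_iff)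

text \<open>By the q-binomial theorem the difference is a multiple of \<open>(q\<^sup>2\<^sup>-\<^sup>2\<^sup>m; q\<^sup>2)\<^sub>N\<close>,
  whose factor of index \<open>m - 1\<close> vanishes.\<close>

lemma theta_qbinom_sum_diff:
  assumes "1 \<le> m" "m \<le> int N"
  shows "theta_qbinom_sum q N m = theta_qbinom_sum q N (m - 1)"
proof -
  define z where "z = q powi (2 - 2 * m)"
  have "theta_qbinom_sum q N m - theta_qbinom_sum q N (m - 1)
      = (\<Sum>k\<le>N. qbinom (q\<^sup>2) N k * q ^ k * (theta_sum q (m - int k) - theta_sum q (m - int k - 1)))"
    unfolding theta_qbinom_sum_def by (simp add: sum_subtractf[symmetric] algebra_simps)
  also have "\<dots> = (\<Sum>k\<le>N. 2 * theta_term q m * (qbinom (q\<^sup>2) N k * ((-1) ^ k * q ^ (k * (k - 1)) * z ^ k)))"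
    by (intro sum.cong refl)
      (simp add: theta_sum_diff mult.assoc theta_term_diff[OF q_nonzero] z_def mult.left_commute)
  also have "\<dots> = 2 * theta_term q m * qpoch z (q\<^sup>2) N"
    by (simp only: sum_distrib_left[symmetric] q_binomial_Rothe[OF q])
  also have "qpoch z (q\<^sup>2) N = 0"
  proof -
    define j where "j = nat (m - 1)"
    have "j < N" using assms unfolding j_def by simp
    have "(q\<^sup>2) ^ j = q powi (int (2 * j))"
      by (simp only: power_int_of_nat power_mult)
    then have "z * (q\<^sup>2) ^ j = q powi (2 - 2 * m) * q powi (2 * int j)"
      unfolding z_def by simp
    also have "\<dots> = q powi 0"
      unfolding j_def using assms q_nonzero by (simp add: power_int_add[symmetric])
    finally show ?thesis
      unfolding qpoch_def using \<open>j < N\<close> by (intro prod_zero) auto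
  qed
  finally show ?thesis by simp
qed

lemma theta_qbinom_sum_top:
  "theta_qbinom_sum q N (int N) = (\<Sum>k\<le>N. qbinom (q\<^sup>2) N k * q ^ (N - k) * theta_sum q (int k))"
proof -
  have "theta_qbinom_sum q N (int N)
      = (\<Sum>k\<le>N. qbinom (q\<^sup>2) N (N - k) * q ^ (N - k) * theta_sum q (int N - int (N - k)))"
    unfolding theta_qbinom_sum_def atLeast0AtMost[symmetric]
    by (subst sum.atLeastAtMost_rev) simp
  also have "\<dots> = (\<Sum>k\<le>N. qbinom (q\<^sup>2) N k * q ^ (N - k) * theta_sum q (int k))"
    by (rule sum.cong) (auto simp: qbinom_sym[OF norm_q2] of_nat_diff)
  finally show ?thesis .
qed

text \<open>Pascal's rule splits the sum in two; by the reflection of \<open>theta_sum\<close>, the second part is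
  \<open>-q\<^sup>N\<^sup>+\<^sup>1\<close> times the sum at \<open>m = N\<close>.\<close>

lemma theta_qbinom_sum_Suc_0:
  "theta_qbinom_sum q (Suc N) 0 = theta_qbinom_sum q N 0 - q ^ Suc N * theta_qbinom_sum q N (int N)"
proof -
  have "theta_qbinom_sum q (Suc N) 0
      = (theta_sum q 0 + (\<Sum>k\<le>N. qbinom (q\<^sup>2) N (Suc k) * q ^ Suc k * theta_sum q (- int (Suc k))))
        + (\<Sum>k\<le>N. (q\<^sup>2) ^ (N - k) * qbinom (q\<^sup>2) N k * q ^ Suc k * theta_sum q (-1 - int k))"
    unfolding theta_qbinom_sum_def
    by (subst sum.atMost_Suc_shift)
      (simp add: qbinom_0[OF norm_q2] qbinom_Suc_Suc[OF norm_q2] sum.distrib algebra_simps)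
  also have "theta_sum q 0 + (\<Sum>k\<le>N. qbinom (q\<^sup>2) N (Suc k) * q ^ Suc k * theta_sum q (- int (Suc k)))
      = (\<Sum>k\<le>Suc N. qbinom (q\<^sup>2) N k * q ^ k * theta_sum q (- int k))"
    by (subst sum.atMost_Suc_shift) (simp add: qbinom_0[OF norm_q2])
  also have "\<dots> = theta_qbinom_sum q N 0"
    unfolding theta_qbinom_sum_def by (simp add: qbinom_eq_0)
  also have "(\<Sum>k\<le>N. (q\<^sup>2) ^ (N - k) * qbinom (q\<^sup>2) N k * q ^ Suc k * theta_sum q (-1 - int k))
      = - (\<Sum>k\<le>N. q ^ Suc N * (qbinom (q\<^sup>2) N k * q ^ (N - k) * theta_sum q (int k)))"
    unfolding sum_negf[symmetric]
  proof (rule sum.cong)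
    fix k assume "k \<in> {..N}"
    then have "2 * (N - k) + Suc k = Suc N + (N - k)" by auto
    then have "(q\<^sup>2) ^ (N - k) * q ^ Suc k = q ^ Suc N * q ^ (N - k)"
      by (simp only: power_mult[symmetric] power_add[symmetric])
    then have "(q\<^sup>2) ^ (N - k) * qbinom (q\<^sup>2) N k * q ^ Suc k * theta_sum q (-1 - int k)
        = - ((q ^ Suc N * q ^ (N - k)) * (qbinom (q\<^sup>2) N k * theta_sum q (int k)))"
      unfolding theta_sum_reflect by (metis (no_types, lifting) mult.assoc mult.left_commute mult_minus_right)
    then show "(q\<^sup>2) ^ (N - k) * qbinom (q\<^sup>2) N k * q ^ Suc k * theta_sum q (-1 - int k)
        = - (q ^ Suc N * (qbinom (q\<^sup>2) N k * q ^ (N - k) * theta_sum q (int k)))"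
      by (simp only: mult_ac)
  qed simp
  also have "(\<Sum>k\<le>N. q ^ Suc N * (qbinom (q\<^sup>2) N k * q ^ (N - k) * theta_sum q (int k)))
      = q ^ Suc N * theta_qbinom_sum q N (int N)"
    by (simp add: theta_qbinom_sum_top sum_distrib_left)
  finally show ?thesis by simp
qed

lemma theta_qbinom_sum_eq:
  assumes "0 \<le> m" "m \<le> int N"
  shows "theta_qbinom_sum q N m = qpoch q q N"
  using assms
proof (induction N arbitrary: m)
  case 0
  then show ?case by (simp add: theta_qbinom_sum_def qbinom_0[OF norm_q2])
next
  case (Suc N)
  have "theta_qbinom_sum q (Suc N) 0 = qpoch q q (Suc N)"
    unfolding theta_qbinom_sum_Suc_0 using Suc.IH[of 0] Suc.IH[of "int N"]
    by (simp add: qpoch_Suc algebra_simps)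
  then have "theta_qbinom_sum q (Suc N) (int j) = qpoch q q (Suc N)" if "j \<le> Suc N" for j
    using that
  proof (induction j)
    case (Suc j)
    then show ?case
      using theta_qbinom_sum_diff[of "int (Suc j)" "Suc N"] by simp
  qed simp
  then show ?case
    using Suc.prems by (metis nonneg_int_cases of_nat_le_iff)
qed

text \<open>The sum \<open>theta_qbinom_sum q (2 n + 1) n\<close> splits into the terms
  \<open>k = n - r\<close> and \<open>k = n + 1 + r\<close>, which pair up by the symmetry of the q-binomial
  coefficients and the reflection of \<open>theta_sum\<close>.\<close>

lemma theta_qbinom_sum_middle:
  "theta_qbinom_sum q (2 * n + 1) (int n) = qpoch (q\<^sup>2) (q\<^sup>2) (2 * n + 1) * q ^ n
     * (\<Sum>r\<le>n. (1 - q ^ (2 * r + 1)) * inverse q ^ r * theta_sum q (int r)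
          / (qpoch (q\<^sup>2) (q\<^sup>2) (n - r) * qpoch (q\<^sup>2) (q\<^sup>2) (n + r + 1)))"
proof -
  define N where "N = 2 * n + 1"
  define P where "P = qpoch (q\<^sup>2) (q\<^sup>2)"
  have P_nonzero: "P j \<noteq> 0" for j
    unfolding P_def by (rule qpoch_self_nonzero[OF norm_q2])
  define T where "T r = (1 - q ^ (2 * r + 1)) * inverse q ^ r * theta_sum q (int r)
    / (P (n - r) * P (n + r + 1))" for r
  define g where "g k = qbinom (q\<^sup>2) N k * q ^ k * theta_sum q (int n - int k)" for k
  have "theta_qbinom_sum q N (int n) = (\<Sum>k<Suc n + Suc n. g k)"
  proof -
    have "Suc N = Suc n + Suc n" by (simp add: N_def)
    then show ?thesis
      unfolding theta_qbinom_sum_def g_def by (simp only: lessThan_Suc_atMost[symmetric])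
  qed
  also have "\<dots> = (\<Sum>k\<le>n. g k) + (\<Sum>r\<le>n. g (Suc n + r))"
  proof -
    have "(\<Sum>k<a + b. g k) = (\<Sum>k<a. g k) + (\<Sum>r<b. g (a + r))" for a b
      by (induction b) (simp_all add: add_ac)
    then show ?thesis by (simp only: lessThan_Suc_atMost)
  qed
  also have "(\<Sum>k\<le>n. g k) = (\<Sum>k\<le>n. g (n - k))"
    unfolding atLeast0AtMost[symmetric] by (subst sum.atLeastAtMost_rev) simp
  also have "(\<Sum>k\<le>n. g (n - k)) + (\<Sum>r\<le>n. g (Suc n + r)) = (\<Sum>r\<le>n. P N * q ^ n * T r)"
    unfolding sum.distrib[symmetric]
  proof (rule sum.cong)
    fix r assume "r \<in> {..n}"
    then have "r \<le> n" by simp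
    have qbinom: "qbinom (q\<^sup>2) N (n - r) = P N / (P (n - r) * P (n + r + 1))"
      "qbinom (q\<^sup>2) N (Suc n + r) = P N / (P (n - r) * P (n + r + 1))"
      unfolding qbinom_def P_def N_def using \<open>r \<le> n\<close> by (simp_all add: algebra_simps)
    have "int n - int (n - r) = int r" "int n - int (Suc n + r) = -1 - int r"
      using \<open>r \<le> n\<close> by (simp_all add: of_nat_diff)
    then have theta: "theta_sum q (int n - int (n - r)) = theta_sum q (int r)"
      "theta_sum q (int n - int (Suc n + r)) = - theta_sum q (int r)"
      by (simp_all only: theta_sum_reflect)
    have "q ^ n = q ^ (n - r) * q ^ r"
      using \<open>r \<le> n\<close> by (simp flip: power_add)
    then have power1: "q ^ (n - r) = q ^ n * inverse q ^ r"
      using q_nonzero by (simp add: power_inverse)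
    have "Suc n + r = (n - r) + (2 * r + 1)"
      using \<open>r \<le> n\<close> by simp
    then have "q ^ (Suc n + r) = q ^ (n - r) * q ^ (2 * r + 1)"
      by (simp only: power_add)
    then have power2: "q ^ (Suc n + r) = q ^ n * q ^ (2 * r + 1) * inverse q ^ r"
      unfolding power1 by (simp only: mult_ac)
    show "g (n - r) + g (Suc n + r) = P N * q ^ n * T r"
      unfolding g_def qbinom theta power1 power2 T_def using P_nonzero q_nonzero
      by (simp add: field_simps)
  qed simp
  finally show ?thesis
    unfolding T_def P_def N_def by (simp add: sum_distrib_left)
qed

lemma theta_bailey_pair:
  "(\<Sum>r\<le>n. (1 - q ^ (2 * r + 1)) * inverse q ^ r * theta_sum q (int r)
      / (qpoch (q\<^sup>2) (q\<^sup>2) (n - r) * qpoch (q\<^sup>2) (q\<^sup>2) (n + r + 1)))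
   = inverse q ^ n / qpoch (-q) q (2 * n + 1)"
proof -
  have "qpoch (q\<^sup>2) (q\<^sup>2) (2 * n + 1) * q ^ n
      * (\<Sum>r\<le>n. (1 - q ^ (2 * r + 1)) * inverse q ^ r * theta_sum q (int r)
          / (qpoch (q\<^sup>2) (q\<^sup>2) (n - r) * qpoch (q\<^sup>2) (q\<^sup>2) (n + r + 1)))
      = qpoch q q (2 * n + 1)"
    using theta_qbinom_sum_middle theta_qbinom_sum_eq[of "int n" "2 * n + 1"] by simp
  moreover have "qpoch q q (2 * n + 1) \<noteq> 0" "qpoch (-q) q (2 * n + 1) \<noteq> 0"
    using qpoch_self_nonzero[OF q] qpoch_self_nonzero[OF norm_q2]
      qpoch_mult_qpoch_minus[of q "2 * n + 1"] by auto
  ultimately show ?thesis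
    using q_nonzero by (simp add: qpoch_mult_qpoch_minus[symmetric] field_simps power_inverse)
qed

end

section \<open>Bailey's lemma\<close>

lemma geometric_product_summable_on:
  fixes x y M :: real
  assumes x: "0 \<le> x" "x < 1" and y: "0 \<le> y" "y < 1" and "0 \<le> M"
  shows "(\<lambda>(r, n). M * x ^ r * y ^ n) summable_on UNIV \<times> UNIV"
proof (rule summable_on_SigmaI[where g = "\<lambda>r. M * x ^ r * (1 / (1 - y))"])
  fix r
  have "(\<lambda>n. M * x ^ r * y ^ n) sums (M * x ^ r * (1 / (1 - y)))"
    using y by (intro sums_mult geometric_sums) auto
  then show "((\<lambda>n. case (r, n) of (r, n) \<Rightarrow> M * x ^ r * y ^ n) has_sum (M * x ^ r * (1 / (1 - y)))) UNIV"
    using x y \<open>0 \<le> M\<close> by (auto intro: sums_nonneg_imp_has_sum)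
next
  have "(\<lambda>r. M * (1 / (1 - y)) * x ^ r) sums (M * (1 / (1 - y)) * (1 / (1 - x)))"
    using x by (intro sums_mult geometric_sums) auto
  then have "((\<lambda>r. M * (1 / (1 - y)) * x ^ r) has_sum (M * (1 / (1 - y)) * (1 / (1 - x)))) UNIV"
    using x y \<open>0 \<le> M\<close> by (auto intro: sums_nonneg_imp_has_sum)
  then show "(\<lambda>r. M * x ^ r * (1 / (1 - y))) summable_on UNIV"
    by (simp add: has_sum_imp_summable mult_ac)
qed (use x y \<open>0 \<le> M\<close> in auto)

lemma sums_swap_geometric_bound:
  fixes f :: "nat \<Rightarrow> nat \<Rightarrow> complex"
  assumes x: "0 \<le> x" "x < 1" and y: "0 \<le> y" "y < 1"
    and bound: "\<And>r n. norm (f r n) \<le> M * x ^ r * y ^ n"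
    and rows: "\<And>r. f r sums g r" and columns: "\<And>n. (\<lambda>r. f r n) sums h n"
  shows "g sums (\<Sum>n. h n)"
proof -
  have "0 \<le> M" using order_trans[OF norm_ge_zero bound[of 0 0]] by simp
  have "(\<lambda>(r, n). M * x ^ r * y ^ n) summable_on UNIV \<times> UNIV"
    using x y \<open>0 \<le> M\<close> by (rule geometric_product_summable_on)
  then have "(\<lambda>z. norm (case z of (r, n) \<Rightarrow> f r n)) summable_on UNIV \<times> UNIV"
    by (rule summable_on_comparison_test) (use bound in auto)
  then have "(\<lambda>(r, n). f r n) summable_on UNIV \<times> UNIV"
    by (simp add: summable_on_iff_abs_summable_on_complex case_prod_unfold)
  then obtain S where S: "((\<lambda>(r, n). f r n) has_sum S) (UNIV \<times> UNIV)"
    using summable_on_def by blast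
  have row_has_sum: "(f r has_sum g r) UNIV" for r
  proof (rule norm_summable_imp_has_sum[OF _ rows])
    have "summable (\<lambda>n. M * x ^ r * y ^ n)"
      using y by (intro summable_mult summable_geometric) auto
    then show "summable (\<lambda>n. norm (f r n))"
      by (rule summable_comparison_test'[where N = 0]) (use bound in simp)
  qed
  have column_has_sum: "((\<lambda>r. f r n) has_sum h n) UNIV" for n
  proof (rule norm_summable_imp_has_sum[OF _ columns])
    have "summable (\<lambda>r. M * y ^ n * x ^ r)"
      using x by (intro summable_mult summable_geometric) auto
    then show "summable (\<lambda>r. norm (f r n))"
      by (rule summable_comparison_test'[where N = 0]) (use bound in \<open>simp add: mult_ac\<close>)
  qed
  have "(g has_sum S) UNIV"
    by (rule has_sum_SigmaD[OF S]) (use row_has_sum in simp)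
  moreover have "((\<lambda>(n, r). f r n) has_sum S) (UNIV \<times> UNIV)"
    using S by (subst (asm) has_sum_swap) simp
  then have "(h has_sum S) UNIV"
    by (rule has_sum_SigmaD) (use column_has_sum in simp)
  ultimately show ?thesis
    using has_sum_imp_sums sums_unique by metis
qed

definition bailey_weight :: "complex \<Rightarrow> complex \<Rightarrow> complex \<Rightarrow> nat \<Rightarrow> complex" where
  "bailey_weight p a c n = qpoch (p / a) p n * qpoch (p / c) p n * (a * c) ^ n"

context
  fixes p a c :: complex
  assumes p: "norm p < 1" "p \<noteq> 0" and a: "a \<noteq> 0" and c: "c \<noteq> 0"
    and a_p: "\<And>k. p ^ Suc k * a \<noteq> 1" and c_p: "\<And>k. p ^ Suc k * c \<noteq> 1"
    and ac: "norm (a * c) < 1"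
begin

text \<open>The row sums of the double series in Bailey's lemma are instances of the q-Gauss sum,
  with \<open>A = p\<^sup>r\<^sup>+\<^sup>1/a\<close>, \<open>B = p\<^sup>r\<^sup>+\<^sup>1/c\<close>, \<open>C = p\<^sup>2\<^sup>r\<^sup>+\<^sup>2\<close>.\<close>

lemma bailey_row_sums:
  "(\<lambda>m. bailey_weight p a c (m + r) / (qpoch p p m * qpoch p p (m + 2 * r + 1)))
     sums (bailey_weight p a c r / (qpoch (p * a) p r * qpoch (p * c) p r)
           * (qpoch_inf (p * a) p * qpoch_inf (p * c) p / (qpoch_inf p p * qpoch_inf (c * a) p)))"
proof -
  define A where "A = p / a * p ^ r"
  define B where "B = p / c * p ^ r"
  define C where "C = p ^ (2 * r + 2)"
  have ratio: "C / (A * B) = a * c" "C / A = p * a * p ^ r" "C / B = p * c * p ^ r"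
    unfolding A_def B_def C_def using p a c by (simp_all add: field_simps power_add power_mult power2_eq_square)
  have C_p: "C * p ^ k \<noteq> 1" for k
    unfolding C_def using power_neq_one[OF p(1), of "2 * r + 2 + k"] by (simp add: power_add mult.assoc)
  have "A \<noteq> 0" "B \<noteq> 0" unfolding A_def B_def using p a c by simp_all
  with C_p have gauss: "q_gauss_term A B C p sums
      (qpoch_inf (p * a * p ^ r) p * qpoch_inf (p * c * p ^ r) p / (qpoch_inf C p * qpoch_inf (a * c) p))"
    using q_gauss_sums[OF p(1), of A B C] ratio ac by simp
  define W where "W = qpoch (p / a) p r * qpoch (p / c) p r * (a * c) ^ r / qpoch p p (2 * r + 1)"
  have split: "qpoch (p / a) p (m + r) = qpoch (p / a) p r * qpoch A p m"
    "qpoch (p / c) p (m + r) = qpoch (p / c) p r * qpoch B p m"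
    "qpoch p p (m + 2 * r + 1) = qpoch p p (2 * r + 1) * qpoch C p m" for m
    unfolding A_def B_def C_def using qpoch_add[of "p / a" p r m] qpoch_add[of "p / c" p r m]
      qpoch_add[of p p "2 * r + 1" m]
    by (simp_all add: add.commute power_add)
  have C_nonzero: "qpoch C p m \<noteq> 0" for m
    by (intro qpoch_nonzero C_p)
  have "bailey_weight p a c (m + r) / (qpoch p p m * qpoch p p (m + 2 * r + 1)) = W * q_gauss_term A B C p m"
    for m
    unfolding bailey_weight_def q_gauss_term_def W_def split ratio(1)
    using qpoch_self_nonzero[OF p(1)] C_nonzero by (simp add: field_simps power_add)
  moreover have "W * (qpoch_inf (p * a * p ^ r) p * qpoch_inf (p * c * p ^ r) p
        / (qpoch_inf C p * qpoch_inf (a * c) p))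
      = bailey_weight p a c r / (qpoch (p * a) p r * qpoch (p * c) p r)
           * (qpoch_inf (p * a) p * qpoch_inf (p * c) p / (qpoch_inf p p * qpoch_inf (c * a) p))"
  proof -
    have "p * a * p ^ k \<noteq> 1" "p * c * p ^ k \<noteq> 1" for k
      using a_p[of k] c_p[of k] by (simp_all add: mult_ac)
    then have "qpoch (p * a) p r \<noteq> 0" "qpoch (p * c) p r \<noteq> 0"
      by (intro qpoch_nonzero; simp)+
    moreover have "qpoch_inf C p \<noteq> 0" "qpoch_inf (a * c) p \<noteq> 0"
      using p by (intro qpoch_inf_nonzero C_p mult_power_neq_one[OF ac]; simp)+
    moreover have "qpoch_inf p p = qpoch p p (2 * r + 1) * qpoch_inf C p"
      unfolding C_def using qpoch_inf_eq_qpoch_mult[OF p(1), of p "2 * r + 1"]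
      by (simp add: power_add)
    ultimately show ?thesis
      unfolding W_def bailey_weight_def
        qpoch_inf_eq_qpoch_mult[OF p(1), of "p * a" r] qpoch_inf_eq_qpoch_mult[OF p(1), of "p * c" r]
      using qpoch_self_nonzero[OF p(1)] by (simp add: field_simps mult.commute[of c a])
  qed
  ultimately show ?thesis
    using sums_mult[OF gauss, of W] by simp
qed

lemma bailey_term_bound:
  assumes R: "0 \<le> R" "R * norm (a * c) < 1" and \<alpha>: "\<And>r. norm (\<alpha> r) \<le> K * R ^ r"
  obtains M x y where "0 \<le> M" "0 \<le> x" "x < 1" "0 \<le> y" "y < 1"
    "\<And>r n. r \<le> n \<Longrightarrow> norm (\<alpha> r * bailey_weight p a c n / (qpoch p p (n - r) * qpoch p p (n + r + 1)))
                 \<le> M * x ^ r * y ^ n"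
proof -
  obtain Ma where Ma: "\<And>n. norm (qpoch (p / a) p n) \<le> Ma" using qpoch_bounded[OF p(1)] by blast
  obtain Mc where Mc: "\<And>n. norm (qpoch (p / c) p n) \<le> Mc" using qpoch_bounded[OF p(1)] by blast
  obtain d where d: "d > 0" "\<And>n. d \<le> norm (qpoch p p n)"
    using qpoch_bounded_below[OF p(1) mult_power_self_neq_one[OF p(1)]] by blast
  have "0 \<le> Ma" "0 \<le> Mc" "0 \<le> K"
    using Ma[of 0] Mc[of 0] order_trans[OF norm_ge_zero \<alpha>[of 0]] by simp_all
  define t where "t = norm (a * c)"
  have t: "0 \<le> t" "t < 1" "R * t < 1" using ac R unfolding t_def by auto
  define y where "y = (max t (R * t) + 1) / 2"
  have y: "t \<le> y" "R * t < y" "y < 1" "0 < y" using t unfolding y_def by (auto simp: max_def)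
  define x where "x = R * t / y"
  have x: "0 \<le> x" "x < 1" using y t R unfolding x_def by (auto simp: divide_simps)
  define M where "M = Ma * Mc * K / (d * d)"
  have "0 \<le> M" unfolding M_def using \<open>0 \<le> Ma\<close> \<open>0 \<le> Mc\<close> \<open>0 \<le> K\<close> d by simp
  have "norm (\<alpha> r * bailey_weight p a c n / (qpoch p p (n - r) * qpoch p p (n + r + 1)))
          \<le> M * x ^ r * y ^ n" if "r \<le> n" for r n
  proof -
    have weight: "norm (bailey_weight p a c n) \<le> Ma * Mc * t ^ n"
      unfolding bailey_weight_def t_def norm_mult norm_power
      using Ma Mc \<open>0 \<le> Ma\<close> \<open>0 \<le> Mc\<close> by (intro mult_mono mult_right_mono) auto
    have denominator: "d * d \<le> norm (qpoch p p (n - r) * qpoch p p (n + r + 1))"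
      unfolding norm_mult using d by (intro mult_mono) auto
    \<comment> \<open>since \<open>r \<le> n\<close>, the growth \<open>R\<^sup>r\<close> of \<open>\<alpha>\<close> is absorbed by the decay \<open>t\<^sup>n\<close> of the weight\<close>
    have "t ^ n = t ^ r * t ^ (n - r)" using that by (simp flip: power_add)
    also have "\<dots> \<le> t ^ r * y ^ (n - r)"
      using t y by (intro mult_left_mono power_mono) auto
    finally have "R ^ r * t ^ n \<le> R ^ r * (t ^ r * y ^ (n - r))"
      using R by (intro mult_left_mono) auto
    also have "\<dots> = x ^ r * (y ^ r * y ^ (n - r))"
      using y unfolding x_def by (simp add: power_mult_distrib power_divide field_simps)
    also have "y ^ r * y ^ (n - r) = y ^ n" using that by (simp flip: power_add)
    finally have growth: "R ^ r * t ^ n \<le> x ^ r * y ^ n" .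
    have "norm (\<alpha> r * bailey_weight p a c n / (qpoch p p (n - r) * qpoch p p (n + r + 1)))
        \<le> K * R ^ r * (Ma * Mc * t ^ n) / (d * d)"
      unfolding norm_divide norm_mult using \<alpha> weight denominator d \<open>0 \<le> K\<close> R t(1) \<open>0 \<le> Ma\<close> \<open>0 \<le> Mc\<close>
      by (intro frac_le mult_mono) auto
    also have "\<dots> = M * (R ^ r * t ^ n)" unfolding M_def by simp
    also have "\<dots> \<le> M * (x ^ r * y ^ n)" using growth \<open>0 \<le> M\<close> by (rule mult_left_mono)
    finally show ?thesis by (simp add: mult.assoc)
  qed
  then show ?thesis
    using that[of M x y] \<open>0 \<le> M\<close> x y by auto
qed

lemma bailey_constant_nonzero:
  "qpoch_inf (p * a) p * qpoch_inf (p * c) p / (qpoch_inf p p * qpoch_inf (c * a) p) \<noteq> 0"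
proof -
  have "p * a * p ^ k \<noteq> 1" "p * c * p ^ k \<noteq> 1" "c * a * p ^ k \<noteq> 1" for k
    using a_p[of k] c_p[of k] mult_power_neq_one[of "c * a" p k] ac p
    by (simp_all add: mult_ac)
  then show ?thesis
    using qpoch_inf_nonzero[OF p(1)] mult_power_self_neq_one[OF p(1)] by simp
qed

theorem bailey_lemma:
  assumes R: "0 \<le> R" "R * norm (a * c) < 1" and \<alpha>: "\<And>r. norm (\<alpha> r) \<le> K * R ^ r"
    and \<beta>: "\<And>n. \<beta> n = (\<Sum>r\<le>n. \<alpha> r / (qpoch p p (n - r) * qpoch p p (n + r + 1)))"
  shows "(\<lambda>r. \<alpha> r * bailey_weight p a c r / (qpoch (p * a) p r * qpoch (p * c) p r))
           sums (qpoch_inf p p * qpoch_inf (c * a) p / (qpoch_inf (p * a) p * qpoch_inf (p * c) p)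
                 * (\<Sum>n. bailey_weight p a c n * \<beta> n))"
proof -
  define E where "E = qpoch_inf (p * a) p * qpoch_inf (p * c) p / (qpoch_inf p p * qpoch_inf (c * a) p)"
  have "E \<noteq> 0"
    unfolding E_def by (rule bailey_constant_nonzero)
  define f where "f r n = (if r \<le> n then \<alpha> r * bailey_weight p a c n
                              / (qpoch p p (n - r) * qpoch p p (n + r + 1)) else 0)" for r n
  obtain M x y where "0 \<le> M" "0 \<le> x" "x < 1" "0 \<le> y" "y < 1"
    and bound: "\<And>r n. r \<le> n \<Longrightarrow> norm (\<alpha> r * bailey_weight p a c n
                    / (qpoch p p (n - r) * qpoch p p (n + r + 1))) \<le> M * x ^ r * y ^ n"
    using bailey_term_bound[OF R \<alpha>] by blast
  have "norm (f r n) \<le> M * x ^ r * y ^ n" for r n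
    using bound \<open>0 \<le> M\<close> \<open>0 \<le> x\<close> \<open>0 \<le> y\<close> by (simp add: f_def)
  moreover have "f r sums (\<alpha> r * bailey_weight p a c r / (qpoch (p * a) p r * qpoch (p * c) p r) * E)" for r
  proof -
    have "(\<lambda>m. f r (m + r)) = (\<lambda>m. \<alpha> r * (bailey_weight p a c (m + r)
        / (qpoch p p m * qpoch p p (m + 2 * r + 1))))"
      by (simp add: fun_eq_iff f_def mult_2 add_ac)
    then have "(\<lambda>m. f r (m + r)) sums (\<alpha> r * (bailey_weight p a c r / (qpoch (p * a) p r * qpoch (p * c) p r) * E))"
      unfolding E_def by (simp only: sums_mult bailey_row_sums)
    moreover have "(\<Sum>m<r. f r m) = 0" by (simp add: f_def)
    ultimately show ?thesis
      using sums_iff_shift[of "f r" r] by (simp add: mult.assoc)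
  qed
  moreover have "(\<lambda>r. f r n) sums (bailey_weight p a c n * \<beta> n)" for n
  proof -
    have "(\<lambda>r. f r n) sums (\<Sum>r\<le>n. f r n)"
      by (rule sums_finite) (auto simp: f_def)
    then show ?thesis
      unfolding \<beta> by (simp add: f_def sum_distrib_left mult_ac)
  qed
  ultimately have "(\<lambda>r. \<alpha> r * bailey_weight p a c r / (qpoch (p * a) p r * qpoch (p * c) p r) * E)
      sums (\<Sum>n. bailey_weight p a c n * \<beta> n)"
    by (rule sums_swap_geometric_bound[OF \<open>0 \<le> x\<close> \<open>x < 1\<close> \<open>0 \<le> y\<close> \<open>y < 1\<close>])
  from sums_mult[OF this, of "inverse E"]
  have "(\<lambda>r. \<alpha> r * bailey_weight p a c r / (qpoch (p * a) p r * qpoch (p * c) p r))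
      sums (inverse E * (\<Sum>n. bailey_weight p a c n * \<beta> n))"
    by (simp only: mult.left_commute[of "inverse E"] left_inverse[OF \<open>E \<noteq> 0\<close>] mult_1_right)
  then show ?thesis
    unfolding E_def inverse_divide .
qed

end

lemma theta_alpha_eq:
  assumes "q \<noteq> 0"
  shows "(\<Sum>j\<in>{-int n..int n}. (-1) powi j * (1 - q ^ (2 * n + 1)) * q powi (j\<^sup>2 - int n))
       = (1 - q ^ (2 * n + 1)) * inverse q ^ n * theta_sum q (int n)"
proof -
  have "q powi (j\<^sup>2 - int n) = q powi (j\<^sup>2) * inverse q ^ n" for j
    using assms by (simp add: power_int_diff power_inverse field_simps)
  then have "(\<Sum>j\<in>{-int n..int n}. (-1) powi j * (1 - q ^ (2 * n + 1)) * q powi (j\<^sup>2 - int n))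
      = (\<Sum>j\<in>{-int n..int n}. (1 - q ^ (2 * n + 1)) * inverse q ^ n * theta_term q j)"
    unfolding theta_term_def by (simp add: mult_ac)
  then show ?thesis
    unfolding theta_sum_def by (simp add: sum_distrib_left)
qed

lemma norm_theta_alpha_le:
  assumes "norm q < 1"
  shows "norm ((1 - q ^ (2 * r + 1)) * inverse q ^ r * theta_sum q (int r))
       \<le> (2 + 4 / (1 - norm q)) * inverse (norm q) ^ r"
proof -
  have "norm (1 - q ^ (2 * r + 1)) \<le> 1 + norm q ^ (2 * r + 1)"
    using norm_triangle_ineq4[of 1 "q ^ (2 * r + 1)"] by (simp only: norm_one norm_power)
  also have "\<dots> \<le> 2"
    using power_le_one[of "norm q" "2 * r + 1"] assms by simp
  finally have "norm (1 - q ^ (2 * r + 1)) \<le> 2" .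
  then have "norm ((1 - q ^ (2 * r + 1)) * inverse q ^ r * theta_sum q (int r))
      \<le> 2 * inverse (norm q) ^ r * (1 + 2 / (1 - norm q))"
    unfolding norm_mult norm_power norm_inverse using theta_sum_bound[OF assms, of r]
    by (intro mult_mono) auto
  then show ?thesis
    by (simp add: algebra_simps)
qed

lemma bailey_weight_theta_beta:
  "bailey_weight (q\<^sup>2) a c n * (inverse q ^ n / qpoch (-q) q (2 * n + 1))
     = qpoch (q\<^sup>2 / a) (q\<^sup>2) n * qpoch (q\<^sup>2 / c) (q\<^sup>2) n * (a * c / q) ^ n
         / (qpoch (- q) q (2 * n) * (1 + q ^ (2 * n + 1)))"
  by (simp add: bailey_weight_def qpoch_Suc power_divide power_inverse field_simps)

theorem theorem5p3:
  fixes q a c :: complex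
  assumes "0 < norm q" and "norm q < 1"
    and "a \<noteq> 0" and "c \<noteq> 0"
    and "\<And>k::nat. q ^ (2 * k + 2) * a \<noteq> 1"
    and "\<And>k::nat. q ^ (2 * k + 2) * c \<noteq> 1"
    and "norm (a * c) < norm q"
  shows "(\<Sum>n. (\<Sum>j\<in>{-int n..int n}. (-1) powi j * (1 - q ^ (2 * n + 1)) * q powi (j\<^sup>2 - int n))
             * (qpoch (q\<^sup>2 / a) (q\<^sup>2) n * qpoch (q\<^sup>2 / c) (q\<^sup>2) n * (a * c) ^ n)
             / (qpoch (q\<^sup>2 * a) (q\<^sup>2) n * qpoch (q\<^sup>2 * c) (q\<^sup>2) n))
       = (qpoch_inf (q\<^sup>2) (q\<^sup>2) * qpoch_inf (c * a) (q\<^sup>2))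
           / (qpoch_inf (q\<^sup>2 * a) (q\<^sup>2) * qpoch_inf (q\<^sup>2 * c) (q\<^sup>2))
         * (\<Sum>n. (qpoch (q\<^sup>2 / a) (q\<^sup>2) n * qpoch (q\<^sup>2 / c) (q\<^sup>2) n * (a * c / q) ^ n)
                 / (qpoch (- q) q (2 * n) * (1 + q ^ (2 * n + 1))))"
proof -
  have q: "norm q < 1" "q \<noteq> 0" and q2: "norm (q\<^sup>2) < 1" "q\<^sup>2 \<noteq> 0"
    using assms(1,2) by (auto simp: norm_power power_less_one_iff)
  have "(q\<^sup>2) ^ Suc k = q ^ (2 * k + 2)" for k
    by (simp only: power_mult[symmetric] mult_Suc_right add.commute)
  then have a_q2: "(q\<^sup>2) ^ Suc k * a \<noteq> 1" and c_q2: "(q\<^sup>2) ^ Suc k * c \<noteq> 1" for k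
    using assms(5,6) by simp_all
  have ac: "norm (a * c) < 1" "inverse (norm q) * norm (a * c) < 1"
    using assms(1,2,7) by (simp_all add: field_simps)
  let ?\<alpha> = "\<lambda>n. (\<Sum>j\<in>{-int n..int n}. (-1) powi j * (1 - q ^ (2 * n + 1)) * q powi (j\<^sup>2 - int n))"
  have "(\<lambda>n. ?\<alpha> n * bailey_weight (q\<^sup>2) a c n / (qpoch (q\<^sup>2 * a) (q\<^sup>2) n * qpoch (q\<^sup>2 * c) (q\<^sup>2) n))
    sums (qpoch_inf (q\<^sup>2) (q\<^sup>2) * qpoch_inf (c * a) (q\<^sup>2) / (qpoch_inf (q\<^sup>2 * a) (q\<^sup>2) * qpoch_inf (q\<^sup>2 * c) (q\<^sup>2))
      * (\<Sum>n. bailey_weight (q\<^sup>2) a c n * (inverse q ^ n / qpoch (-q) q (2 * n + 1))))"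
  proof (rule bailey_lemma[OF q2 assms(3,4) a_q2 c_q2 ac(1) _ ac(2), where K = "2 + 4 / (1 - norm q)"])
    show "norm (?\<alpha> r) \<le> (2 + 4 / (1 - norm q)) * inverse (norm q) ^ r" for r
      unfolding theta_alpha_eq[OF q(2)] by (rule norm_theta_alpha_le[OF q(1)])
    show "inverse q ^ n / qpoch (-q) q (2 * n + 1)
        = (\<Sum>r\<le>n. ?\<alpha> r / (qpoch (q\<^sup>2) (q\<^sup>2) (n - r) * qpoch (q\<^sup>2) (q\<^sup>2) (n + r + 1)))" for n
      unfolding theta_alpha_eq[OF q(2)] by (rule theta_bailey_pair[OF q, symmetric])
  qed simp
  then show ?thesis
    unfolding bailey_weight_theta_beta by (simp add: bailey_weight_def sums_iff)
qed

end
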